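(* Let $V$ be a real vector space of odd finite dimension and $G\le\mathrm{GL}(V)$ a finite group. Let $S\le V$ be an irreducible $\mathbb{R}G$-submodule such that $V$ is $S$-homogeneous (i.e. $V$ is a direct sum of $\mathbb{R}G$-modules isomorphic to $S$), and suppose that the pair $(G,S)$ has the $E1$-property. Then the pair $(G,V)$ has the $E1$-property.
   Context: For a finite group $G$, a finite-dimensional $\mathbb{R}G$-module $V$ with representation $\rho\colon G\to\mathrm{GL}(V)$, and $n\in\mathrm{GL}(V)$ of finite order normalizing $\rho(G)$, the triple $(G,V,n)$ has the $E1$-property if there is $g\in G$ such that $\rho(g)n$ has eigenvalue $1$. The pair $(G,V)$ has the $E1$-property if $(G,V,n')$ has the $E1$-property for every $n'\in\mathrm{GL}(V)$ of finite order normalizing $\rho(G)$. *)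

theory Defs
  imports "HOL-Analysis.Analysis"
begin

definition finite_linear_group :: "('v::euclidean_space \<Rightarrow> 'v) set \<Rightarrow> bool" where
  "finite_linear_group G \<longleftrightarrow> finite G \<and> id \<in> G \<and>
     (\<forall>g\<in>G. linear g \<and> bij g \<and> inv g \<in> G) \<and> (\<forall>g\<in>G. \<forall>h\<in>G. g \<circ> h \<in> G)"

definition G_submodule :: "('v::euclidean_space \<Rightarrow> 'v) set \<Rightarrow> 'v set \<Rightarrow> bool" where
  "G_submodule G W \<longleftrightarrow> subspace W \<and> (\<forall>g\<in>G. \<forall>x\<in>W. g x \<in> W)"

definition irreducible_submodule :: "('v::euclidean_space \<Rightarrow> 'v) set \<Rightarrow> 'v set \<Rightarrow> bool" where
  "irreducible_submodule G S \<longleftrightarrow> G_submodule G S \<and> S \<noteq> {0} \<and>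
     (\<forall>U. G_submodule G U \<and> U \<subseteq> S \<longrightarrow> U = {0} \<or> U = S)"

definition G_iso_submodules :: "('v::euclidean_space \<Rightarrow> 'v) set \<Rightarrow> 'v set \<Rightarrow> 'v set \<Rightarrow> bool" where
  "G_iso_submodules G S W \<longleftrightarrow> (\<exists>\<phi>. linear \<phi> \<and> bij_betw \<phi> S W \<and>
     (\<forall>g\<in>G. \<forall>x\<in>S. \<phi> (g x) = g (\<phi> x)))"

definition homogeneous :: "('v::euclidean_space \<Rightarrow> 'v) set \<Rightarrow> 'v set \<Rightarrow> bool" where
  "homogeneous G S \<longleftrightarrow> (\<exists>(k::nat) (W::nat \<Rightarrow> 'v set).
     (\<forall>i<k. G_submodule G (W i) \<and> G_iso_submodules G S (W i)) \<and>
     (\<forall>v. \<exists>!w. (\<forall>i<k. w i \<in> W i) \<and> (\<forall>i\<ge>k. w i = 0) \<and> v = (\<Sum>i<k. w i)))"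

text \<open>n (a linear map whose restriction to the G-submodule W is an element of GL(W))
  normalizes \<rho>(G), where \<rho>(g) is the restriction of g to W:
  n \<rho>(G) = \<rho>(G) n as sets of maps on W, i.e. n \<rho>(G) n^(-1) = \<rho>(G).\<close>
definition normalizes_on :: "'v set \<Rightarrow> ('v \<Rightarrow> 'v) set \<Rightarrow> ('v \<Rightarrow> 'v) \<Rightarrow> bool" where
  "normalizes_on W G n \<longleftrightarrow>
     (\<lambda>g. restrict (n \<circ> g) W) ` G = (\<lambda>g. restrict (g \<circ> n) W) ` G"

definition GL_on :: "'v::euclidean_space set \<Rightarrow> ('v \<Rightarrow> 'v) \<Rightarrow> bool" where
  "GL_on W n \<longleftrightarrow> linear n \<and> bij_betw n W W"

definition finite_order_on :: "'v set \<Rightarrow> ('v \<Rightarrow> 'v) \<Rightarrow> bool" where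
  "finite_order_on W n \<longleftrightarrow> (\<exists>k>0. \<forall>x\<in>W. (n ^^ k) x = x)"

definition E1_triple :: "('v::euclidean_space \<Rightarrow> 'v) set \<Rightarrow> 'v set \<Rightarrow> ('v \<Rightarrow> 'v) \<Rightarrow> bool" where
  "E1_triple G W n \<longleftrightarrow> (\<exists>g\<in>G. \<exists>x\<in>W. x \<noteq> 0 \<and> g (n x) = x)"

definition E1_pair :: "('v::euclidean_space \<Rightarrow> 'v) set \<Rightarrow> 'v set \<Rightarrow> bool" where
  "E1_pair G W \<longleftrightarrow> (\<forall>n. GL_on W n \<and> finite_order_on W n \<and> normalizes_on W G n
     \<longrightarrow> E1_triple G W n)"

end

theory Submission
  imports Defs "Jordan_Normal_Form.Char_Poly"
begin

text \<open>Write V as the direct sum of copies \<phi> i ` S, i < k, of S. With respect to this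
  decomposition every n normalizing G is a k by k block matrix whose blocks S \<rightarrow> S
  intertwine g with the conjugate of g by n. A nonzero block M is invertible (its kernel and
  image are submodules), and by a Schur argument every block is a real multiple of M: the
  missing real eigenvalue is supplied by the odd dimension of V, applied to an operator
  acting blockwise on V. So n (\<phi> j x) = (\<Sum>i. a i j \<cdot> \<phi> i (M x)) for a real k by k
  matrix a, which again has a real eigenvector u with some eigenvalue \<mu>, because it also
  acts blockwise on V. Then Z x = (\<Sum>j. u j \<cdot> \<phi> j x) embeds S equivariantly into V
  with n \<circ> Z = Z \<circ> (\<mu> M), and \<mu> M is an element of GL(S) of finite order normalizing
  G. The E1-property of (G, S) yields g such that g \<mu> M fixes some x \<noteq> 0, and then
  g n fixes Z x \<noteq> 0.\<close>

lemma odd_degree_real_poly_has_root: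
  fixes p :: "real poly"
  assumes "odd (degree p)"
  shows "\<exists>x. poly p x = 0"
proof -
  have "p \<noteq> 0" using assms by auto
  define q where "q = (if lead_coeff p > 0 then p else -p)"
  have lead_q: "lead_coeff q > 0" using \<open>p \<noteq> 0\<close> unfolding q_def
    by (auto simp: lead_coeff_minus)
  have roots_q: "poly q x = 0 \<Longrightarrow> poly p x = 0" for x by (auto simp: q_def split: if_splits)
  obtain a where a: "\<forall>x\<ge>a. poly q x \<ge> lead_coeff q" using poly_pinfty_gt_lc[OF lead_q] by blast
  define r where "r = - pcompose q [:0,-1:]"
  have "lead_coeff (pcompose q [:0,-1:]) = lead_coeff q * (-1) ^ degree q"
    by (subst lead_coeff_comp) auto
  also have "\<dots> = - lead_coeff q" using assms by (simp add: q_def)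
  finally have lead_r: "lead_coeff r > 0" using lead_q by (simp add: r_def lead_coeff_minus)
  obtain b where b: "\<forall>x\<ge>b. poly r x \<ge> lead_coeff r" using poly_pinfty_gt_lc[OF lead_r] by blast
  define c where "c = \<bar>a\<bar> + \<bar>b\<bar> + 1"
  have "poly q c > 0" using a lead_q unfolding c_def by (smt (verit))
  moreover have "poly r c > 0" using b lead_r unfolding c_def by (smt (verit))
  hence "poly q (-c) < 0" by (simp add: r_def poly_pcompose)
  moreover have "-c < c" by (simp add: c_def)
  ultimately obtain x where "poly q x = 0" using poly_IVT_pos by blast
  thus ?thesis using roots_q by blast
qed

lemma inner_sum_nth_Basis_list:
  fixes bs :: "'v::euclidean_space list"
  assumes "set bs = Basis" "distinct bs" "i < length bs"
  shows "inner (\<Sum>j<length bs. c j *\<^sub>R bs!j) (bs!i) = c i"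
proof -
  have "inner (bs!j) (bs!i) = (if j = i then 1 else 0)" if "j < length bs" for j
    using assms that nth_eq_iff_index_eq[OF assms(2)] nth_mem[of i bs] nth_mem[of j bs]
    by (auto simp: inner_Basis)
  hence "inner (\<Sum>j<length bs. c j *\<^sub>R bs!j) (bs!i) = (\<Sum>j<length bs. if j = i then c j else 0)"
    unfolding inner_sum_left by (intro sum.cong) auto
  thus ?thesis using assms(3) by simp
qed

lemma linear_odd_dim_has_eigenvector:
  fixes f :: "'v::euclidean_space \<Rightarrow> 'v"
  assumes "linear f" and "odd DIM('v)"
  shows "\<exists>\<mu> x. x \<noteq> 0 \<and> f x = \<mu> *\<^sub>R x"
proof -
  obtain bs :: "'v list" where bs: "set bs = Basis" "distinct bs"
    using finite_distinct_list[of Basis] by auto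
  define d where "d = length bs"
  have "d = DIM('v)" unfolding d_def using distinct_card[OF bs(2)] bs(1) by simp
  define A where "A = mat d d (\<lambda>(i,j). inner (f (bs!j)) (bs!i))"
  have A: "A \<in> carrier_mat d d" by (simp add: A_def)
  have "odd (degree (char_poly A))" using degree_monic_char_poly[OF A] \<open>d = DIM('v)\<close> assms(2) by simp
  then obtain \<mu> where "poly (char_poly A) \<mu> = 0" using odd_degree_real_poly_has_root by blast
  hence "eigenvalue A \<mu>" using eigenvalue_root_char_poly[OF A] by simp
  then obtain v where v: "v \<in> carrier_vec d" "v \<noteq> 0\<^sub>v d" "A *\<^sub>v v = \<mu> \<cdot>\<^sub>v v"
    unfolding eigenvalue_def eigenvector_def using A by auto
  define x where "x = (\<Sum>j<d. (vec_index v j) *\<^sub>R bs!j)"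
  have x: "i < d \<Longrightarrow> inner x (bs!i) = vec_index v i" for i
    unfolding x_def d_def using inner_sum_nth_Basis_list[OF bs] by blast
  have "x \<noteq> 0"
  proof
    assume "x = 0"
    hence "v = 0\<^sub>v d" using x v(1) by (intro eq_vecI) auto
    thus False using v(2) by simp
  qed
  moreover have "f x = \<mu> *\<^sub>R x"
  proof (rule euclidean_eqI)
    fix b :: 'v assume "b \<in> Basis"
    then obtain i where i: "i < d" "b = bs!i" using bs d_def by (metis in_set_conv_nth)
    have "inner (f x) b = (\<Sum>j<d. vec_index v j * inner (f (bs!j)) (bs!i))"
      unfolding x_def using i
      by (simp add: linear_sum[OF assms(1)] linear_cmul[OF assms(1)] inner_sum_left)
    also have "\<dots> = vec_index (A *\<^sub>v v) i"
      using i v(1) A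
      by (auto simp: A_def scalar_prod_def row_def lessThan_atLeast0 mult.commute intro!: sum.cong)
    also have "\<dots> = inner (\<mu> *\<^sub>R x) b" using v x i by simp
    finally show "inner (f x) b = inner (\<mu> *\<^sub>R x) b" .
  qed
  ultimately show ?thesis by blast
qed

definition normalizes :: "('v \<Rightarrow> 'v) set \<Rightarrow> ('v \<Rightarrow> 'v) \<Rightarrow> bool" where
  "normalizes G n \<longleftrightarrow> (\<forall>g\<in>G. \<exists>h\<in>G. n \<circ> g = h \<circ> n) \<and> (\<forall>h\<in>G. \<exists>g\<in>G. n \<circ> g = h \<circ> n)"

lemma normalizes_on_UNIV_iff: "normalizes_on UNIV G n \<longleftrightarrow> normalizes G n"
proof -
  have "(\<lambda>g. n \<circ> g) ` G = (\<lambda>g. g \<circ> n) ` G \<longleftrightarrow>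
      (\<forall>g\<in>G. n \<circ> g \<in> (\<lambda>g. g \<circ> n) ` G) \<and> (\<forall>h\<in>G. h \<circ> n \<in> (\<lambda>g. n \<circ> g) ` G)"
    by blast
  also have "\<dots> \<longleftrightarrow> normalizes G n" unfolding normalizes_def by (auto simp: image_iff eq_commute)
  finally show ?thesis unfolding normalizes_on_def restrict_UNIV .
qed

definition twisted_intertwiner ::
    "('v::real_vector \<Rightarrow> 'v) set \<Rightarrow> 'v set \<Rightarrow> ('v \<Rightarrow> 'v) \<Rightarrow> ('v \<Rightarrow> 'v) \<Rightarrow> bool" where
  "twisted_intertwiner G S n T \<longleftrightarrow> linear T \<and> T ` S \<subseteq> S \<and>
     (\<forall>g\<in>G. \<forall>h\<in>G. n \<circ> g = h \<circ> n \<longrightarrow> (\<forall>x\<in>S. T (g x) = h (T x)))"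

lemma twisted_intertwiner_scaleR:
  assumes "subspace S" "\<And>g. g \<in> G \<Longrightarrow> linear g" "twisted_intertwiner G S n T"
  shows "twisted_intertwiner G S n (\<lambda>x. c *\<^sub>R T x)"
proof -
  have T: "linear T" "T ` S \<subseteq> S"
    "\<And>g h x. g \<in> G \<Longrightarrow> h \<in> G \<Longrightarrow> n \<circ> g = h \<circ> n \<Longrightarrow> x \<in> S \<Longrightarrow> T (g x) = h (T x)"
    using assms(3) unfolding twisted_intertwiner_def by auto
  have "linear (\<lambda>x. c *\<^sub>R T x)" using T(1) by (rule linear_compose_scale_right)
  moreover have "(\<lambda>x. c *\<^sub>R T x) ` S \<subseteq> S" using T(2) subspace_scale[OF assms(1)] by blast
  moreover have "c *\<^sub>R T (g x) = h (c *\<^sub>R T x)" if "g \<in> G" "h \<in> G" "n \<circ> g = h \<circ> n" "x \<in> S" for g h x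
    using T(3)[OF that] linear_scale[OF assms(2)[OF that(2)]] by simp
  ultimately show ?thesis unfolding twisted_intertwiner_def by blast
qed

lemma normalizes_on_twisted_intertwiner:
  assumes "normalizes G n" "twisted_intertwiner G S n M"
  shows "normalizes_on S G M"
proof -
  have eq: "restrict (M \<circ> g) S = restrict (h \<circ> M) S" if "g \<in> G" "h \<in> G" "n \<circ> g = h \<circ> n" for g h
    using assms(2) that unfolding twisted_intertwiner_def by (intro restrict_ext) auto
  show ?thesis unfolding normalizes_on_def
  proof (intro equalityI subsetI)
    fix f assume "f \<in> (\<lambda>g. restrict (M \<circ> g) S) ` G"
    then obtain g where g: "g \<in> G" "f = restrict (M \<circ> g) S" by blast
    moreover obtain h where h: "h \<in> G" "n \<circ> g = h \<circ> n"
      using assms(1) g(1) unfolding normalizes_def by blast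
    ultimately show "f \<in> (\<lambda>g. restrict (g \<circ> M) S) ` G" using eq[OF g(1) h] by blast
  next
    fix f assume "f \<in> (\<lambda>g. restrict (g \<circ> M) S) ` G"
    then obtain h where h: "h \<in> G" "f = restrict (h \<circ> M) S" by blast
    obtain g where g: "g \<in> G" "n \<circ> g = h \<circ> n"
      using assms(1) h(1) unfolding normalizes_def by blast
    show "f \<in> (\<lambda>g. restrict (M \<circ> g) S) ` G"
      by (rule image_eqI[where x = g]) (simp_all add: h(2) eq[OF g(1) h(1) g(2)] g(1))
  qed
qed

lemma G_submodule_twisted_equalizer:
  assumes "G_submodule G S" "\<And>g. g \<in> G \<Longrightarrow> linear g" "\<forall>g\<in>G. \<exists>h\<in>G. n \<circ> g = h \<circ> n"
    and "twisted_intertwiner G S n T" "twisted_intertwiner G S n M"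
  shows "G_submodule G {x\<in>S. T x = c *\<^sub>R M x}"
  unfolding G_submodule_def
proof (intro conjI ballI)
  show "subspace {x\<in>S. T x = c *\<^sub>R M x}"
    using assms(1,4,5) unfolding G_submodule_def twisted_intertwiner_def subspace_def
    by (auto simp: linear_0 linear_add linear_scale scaleR_add_right)
  fix g x assume g: "g \<in> G" and x: "x \<in> {x\<in>S. T x = c *\<^sub>R M x}"
  obtain h where h: "h \<in> G" "n \<circ> g = h \<circ> n" using assms(3) g by blast
  have "T (g x) = h (c *\<^sub>R M x)" using assms(4) g h x unfolding twisted_intertwiner_def by auto
  also have "\<dots> = c *\<^sub>R M (g x)"
    using assms(5) g h x linear_scale[OF assms(2)[OF h(1)]] unfolding twisted_intertwiner_def by auto
  finally show "g x \<in> {x\<in>S. T x = c *\<^sub>R M x}" using assms(1) g x unfolding G_submodule_def by auto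
qed

lemma twisted_intertwiner_bij_betw:
  assumes irr: "irreducible_submodule G S" and lin: "\<And>g. g \<in> G \<Longrightarrow> linear g"
    and "normalizes G n" "twisted_intertwiner G S n M" "x0 \<in> S" "M x0 \<noteq> 0"
  shows "bij_betw M S S"
proof -
  have S: "G_submodule G S" "\<And>U. G_submodule G U \<Longrightarrow> U \<subseteq> S \<Longrightarrow> U = {0} \<or> U = S"
    using irr unfolding irreducible_submodule_def by blast+
  have "subspace S" using S(1) unfolding G_submodule_def by blast
  have M: "linear M" "M ` S \<subseteq> S"
    "\<And>g h x. g \<in> G \<Longrightarrow> h \<in> G \<Longrightarrow> n \<circ> g = h \<circ> n \<Longrightarrow> x \<in> S \<Longrightarrow> M (g x) = h (M x)"
    using assms(4) unfolding twisted_intertwiner_def by auto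
  have "G_submodule G {x\<in>S. M x = 0 *\<^sub>R M x}"
    using G_submodule_twisted_equalizer[OF S(1) lin _ assms(4,4)] assms(3)
    unfolding normalizes_def by blast
  moreover have "{x\<in>S. M x = 0 *\<^sub>R M x} \<noteq> S" using assms(5,6) by auto
  ultimately have "{x\<in>S. M x = 0 *\<^sub>R M x} = {0}" using S(2) by blast
  hence "inj_on M S" unfolding linear_inj_on_iff_eq_0[OF M(1) \<open>subspace S\<close>] by auto
  have "G_submodule G (M ` S)"
    unfolding G_submodule_def
  proof (intro conjI ballI)
    show "subspace (M ` S)" using linear_subspace_image[OF M(1) \<open>subspace S\<close>] .
    fix h y assume h: "h \<in> G" and "y \<in> M ` S"
    then obtain x where x: "x \<in> S" "y = M x" by blast
    obtain g where g: "g \<in> G" "n \<circ> g = h \<circ> n" using assms(3) h unfolding normalizes_def by blast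
    have "h y = M (g x)" using M(3)[OF g(1) h g(2) x(1)] x(2) by simp
    moreover have "g x \<in> S" using S(1) g(1) x(1) unfolding G_submodule_def by blast
    ultimately show "h y \<in> M ` S" by blast
  qed
  moreover have "M ` S \<noteq> {0}" using assms(5,6) by blast
  ultimately have "M ` S = S" using S(2) M(2) by blast
  with \<open>inj_on M S\<close> show ?thesis by (simp add: bij_betw_def)
qed

lemma finite_order_on_intertwined:
  assumes "inj_on Z S" "M ` S \<subseteq> S" "\<And>x. x \<in> S \<Longrightarrow> n (Z x) = Z (M x)"
    and "finite_order_on UNIV n"
  shows "finite_order_on S M"
proof -
  have iter: "(n ^^ p) (Z x) = Z ((M ^^ p) x) \<and> (M ^^ p) x \<in> S" if "x \<in> S" for p x
    by (induction p) (use that assms(2,3) in auto)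
  obtain N where "N > 0" "\<And>x. (n ^^ N) x = x"
    using assms(4) unfolding finite_order_on_def by blast
  hence "(M ^^ N) x = x" if "x \<in> S" for x using iter[OF that, of N] that inj_onD[OF assms(1)] by metis
  thus ?thesis using \<open>N > 0\<close> unfolding finite_order_on_def by blast
qed

lemma E1_triple_intertwined:
  assumes "M ` S \<subseteq> S" "\<And>x. x \<in> S \<Longrightarrow> Z x = 0 \<Longrightarrow> x = 0"
    and "\<And>g x. g \<in> G \<Longrightarrow> x \<in> S \<Longrightarrow> Z (g x) = g (Z x)" "\<And>x. x \<in> S \<Longrightarrow> n (Z x) = Z (M x)"
    and "E1_triple G S M"
  shows "E1_triple G UNIV n"
proof -
  obtain g x where x: "g \<in> G" "x \<in> S" "x \<noteq> 0" "g (M x) = x"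
    using assms(5) unfolding E1_triple_def by blast
  have "g (n (Z x)) = g (Z (M x))" using assms(4) x(2) by simp
  also have "\<dots> = Z (g (M x))" using assms(1,3) x(1,2) by (simp add: image_subset_iff)
  also have "\<dots> = Z x" using x(4) by simp
  finally show ?thesis using assms(2) x unfolding E1_triple_def by blast
qed

locale homogeneous_decomposition =
  fixes G :: "('v::euclidean_space \<Rightarrow> 'v) set" and S :: "'v set" and k :: nat
    and \<phi> :: "nat \<Rightarrow> 'v \<Rightarrow> 'v"
  assumes subspace_S: "subspace S"
    and linear_G: "g \<in> G \<Longrightarrow> linear g"
    and G_maps_S: "g \<in> G \<Longrightarrow> x \<in> S \<Longrightarrow> g x \<in> S"
    and linear_\<phi>: "i < k \<Longrightarrow> linear (\<phi> i)"
    and \<phi>_equivariant: "i < k \<Longrightarrow> g \<in> G \<Longrightarrow> x \<in> S \<Longrightarrow> \<phi> i (g x) = g (\<phi> i x)"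
    and unique_decomposition:
      "\<exists>!s. (\<forall>i<k. s i \<in> S) \<and> (\<forall>i\<ge>k. s i = 0) \<and> v = (\<Sum>i<k. \<phi> i (s i))"
begin

definition coord :: "'v \<Rightarrow> nat \<Rightarrow> 'v" where
  "coord v = (THE s. (\<forall>i<k. s i \<in> S) \<and> (\<forall>i\<ge>k. s i = 0) \<and> v = (\<Sum>i<k. \<phi> i (s i)))"

lemma coord_in_S: "i < k \<Longrightarrow> coord v i \<in> S"
  and coord_decomposition: "v = (\<Sum>i<k. \<phi> i (coord v i))"
  using theI'[OF unique_decomposition, of v] unfolding coord_def[symmetric] by blast+

lemma coord_unique:
  assumes "\<And>i. i < k \<Longrightarrow> s i \<in> S" "v = (\<Sum>i<k. \<phi> i (s i))" "i < k"
  shows "coord v i = s i"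
proof -
  define s' where "s' i = (if i < k then s i else 0)" for i
  have "(\<forall>i<k. s' i \<in> S) \<and> (\<forall>i\<ge>k. s' i = 0) \<and> v = (\<Sum>i<k. \<phi> i (s' i))"
    using assms by (auto simp: s'_def)
  hence "coord v = s'" unfolding coord_def by (rule the1_equality[OF unique_decomposition])
  thus ?thesis using assms by (simp add: s'_def)
qed

lemma coord_0: "i < k \<Longrightarrow> coord 0 i = 0"
  by (rule coord_unique) (auto simp: linear_0[OF linear_\<phi>] subspace_0[OF subspace_S])

lemma coord_zero_iff: "v = 0 \<longleftrightarrow> (\<forall>i<k. coord v i = 0)"
proof
  assume "\<forall>i<k. coord v i = 0"
  hence "v = (\<Sum>i<k. \<phi> i 0)" using coord_decomposition[of v] by simp
  thus "v = 0" by (simp add: linear_0[OF linear_\<phi>])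
qed (auto simp: coord_0)

lemma linear_coord: "i < k \<Longrightarrow> linear (\<lambda>v. coord v i)"
proof (rule linearI)
  fix v w :: 'v and c :: real assume i: "i < k"
  have "v + w = (\<Sum>i<k. \<phi> i (coord v i)) + (\<Sum>i<k. \<phi> i (coord w i))"
    using coord_decomposition by metis
  also have "\<dots> = (\<Sum>i<k. \<phi> i (coord v i + coord w i))"
    by (simp add: sum.distrib[symmetric] linear_add[OF linear_\<phi>])
  finally show "coord (v + w) i = coord v i + coord w i"
    using i by (intro coord_unique) (auto intro: subspace_add[OF subspace_S] coord_in_S)
  have "c *\<^sub>R v = c *\<^sub>R (\<Sum>i<k. \<phi> i (coord v i))" using coord_decomposition by metis
  also have "\<dots> = (\<Sum>i<k. \<phi> i (c *\<^sub>R coord v i))"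
    by (simp add: scaleR_sum_right linear_scale[OF linear_\<phi>])
  finally show "coord (c *\<^sub>R v) i = c *\<^sub>R coord v i"
    using i by (intro coord_unique) (auto intro: subspace_scale[OF subspace_S] coord_in_S)
qed

lemma coord_equivariant:
  assumes "g \<in> G" "i < k"
  shows "coord (g v) i = g (coord v i)"
proof (rule coord_unique)
  have "g v = g (\<Sum>i<k. \<phi> i (coord v i))" using coord_decomposition by metis
  also have "\<dots> = (\<Sum>i<k. g (\<phi> i (coord v i)))" by (simp add: linear_sum[OF linear_G[OF assms(1)]])
  also have "\<dots> = (\<Sum>i<k. \<phi> i (g (coord v i)))" using \<phi>_equivariant assms coord_in_S by simp
  finally show "g v = (\<Sum>i<k. \<phi> i (g (coord v i)))" .
qed (use assms G_maps_S coord_in_S in auto)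

lemma coord_\<phi>:
  assumes "x \<in> S" "j < k" "i < k"
  shows "coord (\<phi> j x) i = (if i = j then x else 0)"
proof (rule coord_unique)
  have "(\<Sum>l<k. \<phi> l (if l = j then x else 0)) = (\<Sum>l<k. if l = j then \<phi> j x else 0)"
    by (rule sum.cong) (auto simp: linear_0[OF linear_\<phi>])
  thus "\<phi> j x = (\<Sum>l<k. \<phi> l (if l = j then x else 0))" using assms(2) by simp
qed (use assms subspace_0[OF subspace_S] in auto)

lemma \<phi>_eq_0_iff: "j < k \<Longrightarrow> x \<in> S \<Longrightarrow> \<phi> j x = 0 \<longleftrightarrow> x = 0"
  using coord_\<phi>[of x j j] coord_0[of j] linear_0[OF linear_\<phi>] by auto

lemma k_pos: "0 < k"
proof (rule ccontr)
  assume "\<not> 0 < k"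
  hence "v = 0" for v :: 'v using coord_decomposition[of v] by simp
  thus False using nonzero_Basis SOME_Basis by metis
qed

definition block_map :: "(nat \<Rightarrow> nat \<Rightarrow> 'v \<Rightarrow> 'v) \<Rightarrow> 'v \<Rightarrow> 'v" where
  "block_map A v = (\<Sum>i<k. \<phi> i (\<Sum>j<k. A i j (coord v j)))"

lemma linear_block_map:
  assumes "\<And>i j. i < k \<Longrightarrow> j < k \<Longrightarrow> linear (A i j)"
  shows "linear (block_map A)"
  unfolding block_map_def
proof (intro linear_compose_sum ballI)
  fix i assume "i \<in> {..<k}"
  hence "linear (\<lambda>v. \<Sum>j<k. A i j (coord v j))"
    using assms linear_compose[OF linear_coord] by (auto intro!: linear_compose_sum simp: o_def)
  from linear_compose[OF this linear_\<phi>] \<open>i \<in> {..<k}\<close>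
  show "linear (\<lambda>v. \<phi> i (\<Sum>j<k. A i j (coord v j)))" by (simp add: o_def)
qed

lemma coord_block_map:
  assumes "\<And>i j x. i < k \<Longrightarrow> j < k \<Longrightarrow> x \<in> S \<Longrightarrow> A i j x \<in> S" "i < k"
  shows "coord (block_map A v) i = (\<Sum>j<k. A i j (coord v j))"
  unfolding block_map_def
  by (rule coord_unique) (use assms coord_in_S in \<open>auto intro!: subspace_sum[OF subspace_S]\<close>)

definition diagonal_map :: "('v \<Rightarrow> 'v) \<Rightarrow> 'v \<Rightarrow> 'v" where
  "diagonal_map F = block_map (\<lambda>i j x. if i = j then F x else 0)"

lemma linear_diagonal_map: "linear F \<Longrightarrow> linear (diagonal_map F)"
  unfolding diagonal_map_def
proof (rule linear_block_map)
  fix i j assume "linear F"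
  thus "linear (\<lambda>x. if i = j then F x else 0)" by (cases "i = j") (simp_all add: linear_zero)
qed

lemma coord_diagonal_map:
  assumes "F ` S \<subseteq> S" "i < k"
  shows "coord (diagonal_map F v) i = F (coord v i)"
proof -
  have "coord (diagonal_map F v) i = (\<Sum>j<k. if i = j then F (coord v j) else 0)"
    unfolding diagonal_map_def
    by (rule coord_block_map) (use assms subspace_0[OF subspace_S] in auto)
  also have "\<dots> = F (coord v i)" using assms(2) by simp
  finally show ?thesis .
qed

lemma real_matrix_has_eigenvector:
  fixes a :: "nat \<Rightarrow> nat \<Rightarrow> real"
  assumes "odd DIM('v)"
  obtains \<mu> u j0 where "j0 < k" "u j0 \<noteq> 0" "\<And>i. i < k \<Longrightarrow> (\<Sum>j<k. a i j * u j) = \<mu> * u i"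
proof -
  let ?B = "block_map (\<lambda>i j x. a i j *\<^sub>R x)"
  have "linear ?B" by (rule linear_block_map) (simp add: linear_compose_scale_right)
  then obtain \<mu> y where y: "y \<noteq> 0" "?B y = \<mu> *\<^sub>R y"
    using linear_odd_dim_has_eigenvector[OF _ assms] by blast
  have eigen_coord: "(\<Sum>j<k. a i j *\<^sub>R coord y j) = \<mu> *\<^sub>R coord y i" if "i < k" for i
    using coord_block_map[of "\<lambda>i j x. a i j *\<^sub>R x" i y] y(2) that
    by (simp add: subspace_scale[OF subspace_S] linear_scale[OF linear_coord])
  obtain j0 where j0: "j0 < k" "coord y j0 \<noteq> 0" using y(1) coord_zero_iff by blast
  text \<open>The eigenvector y has coordinates in S; pairing them with one nonzero coordinate
    gives a real eigenvector.\<close>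
  define u where "u j = inner (coord y j) (coord y j0)" for j
  have "(\<Sum>j<k. a i j * u j) = \<mu> * u i" if "i < k" for i
    using arg_cong[OF eigen_coord[OF that], of "\<lambda>z. inner z (coord y j0)"]
    by (simp add: u_def inner_sum_left)
  moreover have "u j0 \<noteq> 0" using j0(2) by (simp add: u_def)
  ultimately show thesis using that j0(1) by blast
qed

end

lemma homogeneous_decomposition_exists:
  fixes G :: "('v::euclidean_space \<Rightarrow> 'v) set"
  assumes "\<And>g. g \<in> G \<Longrightarrow> linear g" "G_submodule G S" "homogeneous G S"
  obtains k \<phi> where "homogeneous_decomposition G S k \<phi>"
proof -
  obtain k and W :: "nat \<Rightarrow> 'v set" where
    iso: "\<forall>i<k. G_submodule G (W i) \<and> G_iso_submodules G S (W i)"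
    and dec: "\<forall>v. \<exists>!w. (\<forall>i<k. w i \<in> W i) \<and> (\<forall>i\<ge>k. w i = 0) \<and> v = (\<Sum>i<k. w i)"
    using assms(3) unfolding homogeneous_def by blast
  have "\<forall>i. \<exists>f. i < k \<longrightarrow>
      linear f \<and> bij_betw f S (W i) \<and> (\<forall>g\<in>G. \<forall>x\<in>S. f (g x) = g (f x))"
    using iso unfolding G_iso_submodules_def by blast
  then obtain \<phi> where \<phi>: "\<And>i. i < k \<Longrightarrow>
      linear (\<phi> i) \<and> bij_betw (\<phi> i) S (W i) \<and> (\<forall>g\<in>G. \<forall>x\<in>S. \<phi> i (g x) = g (\<phi> i x))"
    by metis
  have \<phi>_W: "\<phi> i ` S = W i" and inj_\<phi>: "inj_on (\<phi> i) S" if "i < k" for i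
    using \<phi>[OF that] by (simp_all add: bij_betw_def)
  have "\<exists>!s. (\<forall>i<k. s i \<in> S) \<and> (\<forall>i\<ge>k. s i = 0) \<and> v = (\<Sum>i<k. \<phi> i (s i))" for v
  proof (rule ex_ex1I)
    let ?P = "\<lambda>w. (\<forall>i<k. w i \<in> W i) \<and> (\<forall>i\<ge>k. w i = 0) \<and> v = (\<Sum>i<k. w i)"
    have dec_v: "\<exists>!w. ?P w" using dec by blast
    obtain w where "?P w" using ex1_implies_ex[OF dec_v] ..
    hence w: "\<And>i. i < k \<Longrightarrow> w i \<in> \<phi> i ` S" "v = (\<Sum>i<k. w i)" using \<phi>_W by auto
    define s where "s i = (if i < k then inv_into S (\<phi> i) (w i) else 0)" for i
    have "\<forall>i<k. s i \<in> S" using w(1) by (simp add: s_def inv_into_into)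
    moreover have "\<forall>i\<ge>k. s i = 0" by (simp add: s_def)
    moreover have "v = (\<Sum>i<k. \<phi> i (s i))"
      unfolding w(2) by (rule sum.cong) (simp_all add: s_def f_inv_into_f w(1))
    ultimately show "\<exists>s. (\<forall>i<k. s i \<in> S) \<and> (\<forall>i\<ge>k. s i = 0) \<and> v = (\<Sum>i<k. \<phi> i (s i))"
      by blast
  next
    fix s t
    assume s: "(\<forall>i<k. s i \<in> S) \<and> (\<forall>i\<ge>k. s i = 0) \<and> v = (\<Sum>i<k. \<phi> i (s i))"
      and t: "(\<forall>i<k. t i \<in> S) \<and> (\<forall>i\<ge>k. t i = 0) \<and> v = (\<Sum>i<k. \<phi> i (t i))"
    let ?P = "\<lambda>w. (\<forall>i<k. w i \<in> W i) \<and> (\<forall>i\<ge>k. w i = 0) \<and> v = (\<Sum>i<k. w i)"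
    let ?w = "\<lambda>s i. if i < k then \<phi> i (s i) else 0"
    have dec_v: "\<exists>!w. ?P w" using dec by blast
    have "?P (?w r)" if "\<forall>i<k. r i \<in> S" "v = (\<Sum>i<k. \<phi> i (r i))" for r
      using that \<phi>_W by auto
    hence Ps: "?P (?w s)" and Pt: "?P (?w t)" using s t by blast+
    have "(THE w. ?P w) = ?w s" by (rule the1_equality[OF dec_v]) (rule Ps)
    moreover have "(THE w. ?P w) = ?w t" by (rule the1_equality[OF dec_v]) (rule Pt)
    ultimately have w_eq: "?w s = ?w t" by simp
    show "s = t"
    proof
      fix i show "s i = t i"
      proof (cases "i < k")
        case True
        hence "\<phi> i (s i) = \<phi> i (t i)" using fun_cong[OF w_eq, of i] by simp
        thus ?thesis using True s t inj_\<phi>[OF True] by (meson inj_onD)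
      qed (use s t in auto)
    qed
  qed
  moreover have "subspace S" "\<And>g x. g \<in> G \<Longrightarrow> x \<in> S \<Longrightarrow> g x \<in> S"
    using assms(2) unfolding G_submodule_def by blast+
  ultimately have "homogeneous_decomposition G S k \<phi>"
    using assms(1) \<phi> by (simp add: homogeneous_decomposition_def)
  thus thesis by (rule that)
qed

locale homogeneous_normalizer = homogeneous_decomposition G S k \<phi>
  for G :: "('v::euclidean_space \<Rightarrow> 'v) set" and S k \<phi> +
  fixes n :: "'v \<Rightarrow> 'v"
  assumes odd_dim: "odd DIM('v)"
    and irreducible_S: "irreducible_submodule G S"
    and linear_n: "linear n" and inj_n: "inj n" and normalizes_n: "normalizes G n"
begin

lemma nonzero_in_S: obtains s0 where "s0 \<in> S" "s0 \<noteq> 0"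
  using irreducible_S subspace_0[OF subspace_S] unfolding irreducible_submodule_def by blast

lemma twisted_intertwiner_proportional:
  assumes T: "twisted_intertwiner G S n T" and M: "twisted_intertwiner G S n M"
    and "bij_betw M S S"
  obtains c where "\<And>x. x \<in> S \<Longrightarrow> T x = c *\<^sub>R M x"
proof -
  have TM: "linear T" "T ` S \<subseteq> S" "linear M" "M ` S \<subseteq> S"
    using T M unfolding twisted_intertwiner_def by auto
  text \<open>S itself may have even dimension; the real eigenvalue is found for the diagonal
    extensions of T and M to V instead.\<close>
  define L where "L = diagonal_map T"
  define K where "K = diagonal_map M"
  have "linear L" "linear K" unfolding L_def K_def using TM by (simp_all add: linear_diagonal_map)
  have "inj K"
    unfolding linear_inj_iff_eq_0[OF \<open>linear K\<close>]
  proof (intro allI impI)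
    fix v assume "K v = 0"
    hence "M (coord v i) = 0" if "i < k" for i
      using coord_diagonal_map[OF TM(4) that, of v] coord_0[OF that] by (simp add: K_def)
    moreover have "inj_on M S" using \<open>bij_betw M S S\<close> by (simp add: bij_betw_def)
    ultimately have "coord v i = 0" if "i < k" for i
      using that coord_in_S linear_inj_on_iff_eq_0[OF TM(3) subspace_S] by blast
    thus "v = 0" using coord_zero_iff by blast
  qed
  then obtain K' where K': "linear K'" "\<And>x. K (K' x) = x"
    using linear_injective_isomorphism[OF \<open>linear K\<close>] by blast
  obtain \<mu> y where y: "y \<noteq> 0" "K' (L y) = \<mu> *\<^sub>R y"
    using linear_odd_dim_has_eigenvector[OF linear_compose[OF \<open>linear L\<close> K'(1)] odd_dim] by auto
  have "L y = K (\<mu> *\<^sub>R y)" using K'(2)[of "L y"] y(2) by simp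
  have eigen_coord: "T (coord y i) = \<mu> *\<^sub>R M (coord y i)" if "i < k" for i
  proof -
    have "T (coord y i) = coord (L y) i" using coord_diagonal_map[OF TM(2) that] by (simp add: L_def)
    also have "\<dots> = M (coord (\<mu> *\<^sub>R y) i)"
      using coord_diagonal_map[OF TM(4) that] \<open>L y = K (\<mu> *\<^sub>R y)\<close> by (simp add: K_def)
    also have "\<dots> = \<mu> *\<^sub>R M (coord y i)"
      by (simp add: linear_scale[OF linear_coord[OF that]] linear_scale[OF TM(3)])
    finally show ?thesis .
  qed
  obtain i where i: "i < k" "coord y i \<noteq> 0" using y(1) coord_zero_iff by blast
  have "G_submodule G {x\<in>S. T x = \<mu> *\<^sub>R M x}"
    using G_submodule_twisted_equalizer[OF _ linear_G _ T M] irreducible_S normalizes_n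
    unfolding irreducible_submodule_def normalizes_def by blast
  moreover have "coord y i \<in> {x\<in>S. T x = \<mu> *\<^sub>R M x}" using eigen_coord i(1) coord_in_S by blast
  ultimately have "{x\<in>S. T x = \<mu> *\<^sub>R M x} = S"
    using irreducible_S i(2) unfolding irreducible_submodule_def by blast
  thus thesis using that by blast
qed

lemma twisted_intertwiner_block:
  assumes "i < k" "j < k"
  shows "twisted_intertwiner G S n (\<lambda>x. coord (n (\<phi> j x)) i)"
  unfolding twisted_intertwiner_def
proof (intro conjI ballI impI)
  show "linear (\<lambda>x. coord (n (\<phi> j x)) i)"
    using linear_compose[OF linear_compose[OF linear_\<phi>[OF assms(2)] linear_n] linear_coord[OF assms(1)]]
    by (simp add: o_def)
  show "(\<lambda>x. coord (n (\<phi> j x)) i) ` S \<subseteq> S" using coord_in_S assms by blast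
  fix g h x assume g: "g \<in> G" and h: "h \<in> G" and "n \<circ> g = h \<circ> n" and x: "x \<in> S"
  have "coord (n (\<phi> j (g x))) i = coord (n (g (\<phi> j x))) i" using \<phi>_equivariant assms(2) g x by simp
  also have "\<dots> = coord (h (n (\<phi> j x))) i" using fun_cong[OF \<open>n \<circ> g = h \<circ> n\<close>] by simp
  also have "\<dots> = h (coord (n (\<phi> j x)) i)" using coord_equivariant[OF h assms(1)] .
  finally show "coord (n (\<phi> j (g x))) i = h (coord (n (\<phi> j x)) i)" .
qed

lemma normalizer_blocks_proportional:
  obtains M a where "twisted_intertwiner G S n M" "bij_betw M S S"
    "\<And>j x. j < k \<Longrightarrow> x \<in> S \<Longrightarrow> n (\<phi> j x) = (\<Sum>i<k. a i j *\<^sub>R \<phi> i (M x))"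
proof -
  obtain s0 where s0: "s0 \<in> S" "s0 \<noteq> 0" by (rule nonzero_in_S)
  have "n (\<phi> 0 s0) \<noteq> 0"
    using \<phi>_eq_0_iff[OF k_pos s0(1)] s0(2) inj_n linear_inj_iff_eq_0[OF linear_n] by blast
  then obtain i0 where i0: "i0 < k" "coord (n (\<phi> 0 s0)) i0 \<noteq> 0" using coord_zero_iff by blast
  define M where "M = (\<lambda>x. coord (n (\<phi> 0 x)) i0)"
  have M: "twisted_intertwiner G S n M"
    unfolding M_def using twisted_intertwiner_block[OF i0(1) k_pos] .
  have "bij_betw M S S"
    using twisted_intertwiner_bij_betw[OF irreducible_S linear_G normalizes_n M s0(1)] i0(2)
    by (simp add: M_def)
  have "\<exists>c. \<forall>x\<in>S. coord (n (\<phi> j x)) i = c *\<^sub>R M x" if "i < k" "j < k" for i j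
    using twisted_intertwiner_proportional[OF twisted_intertwiner_block[OF that] M \<open>bij_betw M S S\<close>]
    by metis
  then obtain a where a: "\<And>i j x. i < k \<Longrightarrow> j < k \<Longrightarrow> x \<in> S \<Longrightarrow> coord (n (\<phi> j x)) i = a i j *\<^sub>R M x"
    by metis
  have "n (\<phi> j x) = (\<Sum>i<k. a i j *\<^sub>R \<phi> i (M x))" if "j < k" "x \<in> S" for j x
  proof -
    have "n (\<phi> j x) = (\<Sum>i<k. \<phi> i (coord (n (\<phi> j x)) i))" by (rule coord_decomposition)
    also have "\<dots> = (\<Sum>i<k. a i j *\<^sub>R \<phi> i (M x))"
      using a that by (simp add: linear_scale[OF linear_\<phi>])
    finally show ?thesis .
  qed
  with M \<open>bij_betw M S S\<close> show thesis by (rule that)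
qed

lemma normalizer_preserves_copy_of_S:
  obtains M Z where "twisted_intertwiner G S n M" "bij_betw M S S"
    "linear Z" "\<And>x. x \<in> S \<Longrightarrow> Z x = 0 \<Longrightarrow> x = 0"
    "\<And>g x. g \<in> G \<Longrightarrow> x \<in> S \<Longrightarrow> Z (g x) = g (Z x)"
    "\<And>x. x \<in> S \<Longrightarrow> n (Z x) = Z (M x)"
proof -
  obtain M a where M: "twisted_intertwiner G S n M" "bij_betw M S S"
    and n_\<phi>: "\<And>j x. j < k \<Longrightarrow> x \<in> S \<Longrightarrow> n (\<phi> j x) = (\<Sum>i<k. a i j *\<^sub>R \<phi> i (M x))"
    using normalizer_blocks_proportional by blast
  obtain \<mu> u j0 where j0: "j0 < k" "u j0 \<noteq> 0" and u: "\<And>i. i < k \<Longrightarrow> (\<Sum>j<k. a i j * u j) = \<mu> * u i"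
    using real_matrix_has_eigenvector[OF odd_dim, where a = a] by blast
  have lin_M: "linear M" using M(1) unfolding twisted_intertwiner_def by auto
  define Z where "Z = (\<lambda>x. \<Sum>j<k. u j *\<^sub>R \<phi> j x)"
  have "linear Z" unfolding Z_def
    by (rule linear_compose_sum) (auto intro!: linear_compose_scale_right linear_\<phi>)
  have Z_kernel: "x = 0" if "x \<in> S" "Z x = 0" for x
  proof -
    have "Z x = (\<Sum>j<k. \<phi> j (u j *\<^sub>R x))" unfolding Z_def
      by (rule sum.cong) (use linear_scale[OF linear_\<phi>] in auto)
    hence "coord (Z x) j0 = u j0 *\<^sub>R x"
      by (intro coord_unique j0(1)) (auto intro: subspace_scale[OF subspace_S] that)
    thus ?thesis using that(2) coord_0[OF j0(1)] j0(2) by simp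
  qed
  have Z_equivariant: "Z (g x) = g (Z x)" if "g \<in> G" "x \<in> S" for g x
    unfolding Z_def using that \<phi>_equivariant
    by (simp add: linear_sum[OF linear_G] linear_scale[OF linear_G])
  have n_Z: "n (Z x) = Z (\<mu> *\<^sub>R M x)" if "x \<in> S" for x
  proof -
    have "n (Z x) = (\<Sum>j<k. u j *\<^sub>R (\<Sum>i<k. a i j *\<^sub>R \<phi> i (M x)))"
      unfolding Z_def using that n_\<phi> by (simp add: linear_sum[OF linear_n] linear_scale[OF linear_n])
    also have "\<dots> = (\<Sum>j<k. \<Sum>i<k. (a i j * u j) *\<^sub>R \<phi> i (M x))"
      by (simp add: scaleR_sum_right mult.commute)
    also have "\<dots> = (\<Sum>i<k. \<Sum>j<k. (a i j * u j) *\<^sub>R \<phi> i (M x))"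
      by (rule sum.swap)
    also have "\<dots> = (\<Sum>i<k. (\<Sum>j<k. a i j * u j) *\<^sub>R \<phi> i (M x))"
      by (simp add: scaleR_sum_left)
    also have "\<dots> = Z (\<mu> *\<^sub>R M x)"
      unfolding Z_def by (rule sum.cong) (use u linear_scale[OF linear_\<phi>] in auto)
    finally show ?thesis .
  qed
  obtain s0 where s0: "s0 \<in> S" "s0 \<noteq> 0" by (rule nonzero_in_S)
  have "\<mu> \<noteq> 0"
  proof
    assume "\<mu> = 0"
    hence "n (Z s0) = 0" using n_Z[OF s0(1)] linear_0[OF \<open>linear Z\<close>] by simp
    thus False using inj_n linear_inj_iff_eq_0[OF linear_n] Z_kernel s0 by blast
  qed
  moreover have "M s0 \<noteq> 0"
    using M(2) s0 lin_M linear_inj_on_iff_eq_0[OF lin_M subspace_S] by (auto simp: bij_betw_def)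
  moreover have \<mu>M: "twisted_intertwiner G S n (\<lambda>x. \<mu> *\<^sub>R M x)"
    by (rule twisted_intertwiner_scaleR[OF subspace_S _ M(1)]) (rule linear_G)
  ultimately have "bij_betw (\<lambda>x. \<mu> *\<^sub>R M x) S S"
    using twisted_intertwiner_bij_betw[OF irreducible_S linear_G normalizes_n \<mu>M s0(1)] by simp
  from that[OF \<mu>M this \<open>linear Z\<close> Z_kernel Z_equivariant n_Z] show thesis .
qed

end

theorem lemma2:
  fixes G :: "('v::euclidean_space \<Rightarrow> 'v) set" and S :: "'v set"
  assumes "odd DIM('v)"
    and "finite_linear_group G"
    and "irreducible_submodule G S"
    and "homogeneous G S"
    and "E1_pair G S"
  shows "E1_pair G (UNIV :: 'v set)"
  unfolding E1_pair_def
proof (intro allI impI)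
  have lin: "\<And>g. g \<in> G \<Longrightarrow> linear g" using assms(2) unfolding finite_linear_group_def by blast
  obtain k \<phi> where dec: "homogeneous_decomposition G S k \<phi>"
    using homogeneous_decomposition_exists[OF lin _ assms(4)] assms(3)
    unfolding irreducible_submodule_def by blast
  fix n assume "GL_on UNIV n \<and> finite_order_on UNIV n \<and> normalizes_on UNIV G n"
  hence n: "linear n" "inj n" "finite_order_on UNIV n" "normalizes G n"
    by (auto simp: GL_on_def bij_betw_def normalizes_on_UNIV_iff)
  interpret homogeneous_normalizer G S k \<phi> n
    using dec n assms(1,3) by (intro homogeneous_normalizer.intro homogeneous_normalizer_axioms.intro)
  obtain M Z where M: "twisted_intertwiner G S n M" "bij_betw M S S"
    and Z: "linear Z" "\<And>x. x \<in> S \<Longrightarrow> Z x = 0 \<Longrightarrow> x = 0"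
      "\<And>g x. g \<in> G \<Longrightarrow> x \<in> S \<Longrightarrow> Z (g x) = g (Z x)" "\<And>x. x \<in> S \<Longrightarrow> n (Z x) = Z (M x)"
    using normalizer_preserves_copy_of_S by blast
  have M_S: "M ` S \<subseteq> S" and "linear M" using M(1) unfolding twisted_intertwiner_def by auto
  have "inj_on Z S" using Z(1,2) linear_inj_on_iff_eq_0[OF Z(1) subspace_S] by blast
  have "E1_triple G S M"
    using assms(5) M \<open>linear M\<close> finite_order_on_intertwined[OF \<open>inj_on Z S\<close> M_S Z(4) n(3)]
      normalizes_on_twisted_intertwiner[OF n(4) M(1)]
    unfolding E1_pair_def GL_on_def by blast
  with M_S Z(2-4) show "E1_triple G UNIV n" by (rule E1_triple_intertwined)
qed

end
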